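(* Let $p$ be an odd prime, $H\cong\mathbb{Z}_p^3$, and $\mathcal A$ an exceptional S-ring over $H$. Then $|\mathrm{Aut}(\mathcal A)|=p^4$ and $\mathrm{Iso}_1(\mathcal A)=\mathrm{Aut}(H)$.
   Context: $H$ is written additively (identity denoted $1$ in $\mathrm{Iso}_1$ means the zero element). $\mathrm{Cay}(H,S)$ is the digraph on $H$ with arcs $(x,x+s)$, $s\in S$. An S-ring over $H$ is a subalgebra $\mathcal A\subseteq\mathbb{Q}H$ spanned by $\underline{T}=\sum_{t\in T}t$ for $T$ in a partition $\mathrm{Bs}(\mathcal A)$ of $H$ (basic sets) with $\{0\}\in\mathrm{Bs}(\mathcal A)$ and $-T\in\mathrm{Bs}(\mathcal A)$ for all $T$. Two S-rings over groups $H,K$ are Cayley isomorphic if some group isomorphism $H\to K$ maps the basic sets of the first onto the basic sets of the second. $\mathcal A$ is exceptional if it is Cayley isomorphic to the S-ring over $\mathbb{Z}_p^3$ whose basic sets are the orbits of the cyclic group generated by the linear map given by the matrix $\begin{pmatrix}1&1&0\\0&1&1\\0&0&1\end{pmatrix}$. $\mathrm{Aut}(\mathcal A)=\bigcap_{T\in\mathrm{Bs}(\mathcal A)}\mathrm{Aut}(\mathrm{Cay}(H,T))$. $\mathrm{Iso}_1(\mathcal A)$ is the set of bijections $f:H\to H$ fixing $0$ such that $\{\mathrm{Cay}(H,T)^f:T\in\mathrm{Bs}(\mathcal A)\}=\{\mathrm{Cay}(H,S):S\in\mathrm{Bs}(\mathcal B)\}$ for some S-ring $\mathcal B$ over $H$.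 *)

theory Defs
  imports Main "HOL-Computational_Algebra.Primes"
begin

definition cay :: "'a::ab_group_add set \<Rightarrow> ('a \<times> 'a) set" where
  "cay S = {(x, y). y - x \<in> S}"

text \<open>S-ring over the (finite) group UNIV, given by its set of basic sets Bs.
  Closure of the span under multiplication in QH is written out: the coefficient of z
  in the product of the sums of T1 and T2 is constant on each basic set.\<close>
definition is_Sring :: "'a::ab_group_add set set \<Rightarrow> bool" where
  "is_Sring Bs \<longleftrightarrow> finite (UNIV :: 'a set)
     \<and> (\<forall>T\<in>Bs. T \<noteq> {})
     \<and> (\<forall>T1\<in>Bs. \<forall>T2\<in>Bs. T1 \<noteq> T2 \<longrightarrow> T1 \<inter> T2 = {})
     \<and> \<Union>Bs = UNIV
     \<and> {0} \<in> Bs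
     \<and> (\<forall>T\<in>Bs. uminus ` T \<in> Bs)
     \<and> (\<forall>T1\<in>Bs. \<forall>T2\<in>Bs. \<forall>T\<in>Bs. \<forall>z\<in>T. \<forall>z'\<in>T.
          card {(x, y). x \<in> T1 \<and> y \<in> T2 \<and> x + y = z}
        = card {(x, y). x \<in> T1 \<and> y \<in> T2 \<and> x + y = z'})"

definition zp3 :: "nat \<Rightarrow> (nat \<times> nat \<times> nat) set" where
  "zp3 p = {(a, b, c). a < p \<and> b < p \<and> c < p}"

fun add3 :: "nat \<Rightarrow> nat \<times> nat \<times> nat \<Rightarrow> nat \<times> nat \<times> nat \<Rightarrow> nat \<times> nat \<times> nat" where
  "add3 p (a, b, c) (a', b', c') = ((a + a') mod p, (b + b') mod p, (c + c') mod p)"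

text \<open>The linear map with matrix ((1,1,0),(0,1,1),(0,0,1)) acting on column vectors.\<close>
fun exc_map :: "nat \<Rightarrow> nat \<times> nat \<times> nat \<Rightarrow> nat \<times> nat \<times> nat" where
  "exc_map p (a, b, c) = ((a + b) mod p, (b + c) mod p, c)"

definition exc_orbit :: "nat \<Rightarrow> nat \<times> nat \<times> nat \<Rightarrow> (nat \<times> nat \<times> nat) set" where
  "exc_orbit p v = {(exc_map p ^^ k) v | k. True}"

text \<open>Exceptional: Cayley isomorphic (via a group isomorphism H \<rightarrow> Z_p^3) to the orbit S-ring.\<close>
definition exceptional :: "nat \<Rightarrow> 'a::ab_group_add set set \<Rightarrow> bool" where
  "exceptional p Bs \<longleftrightarrow> (\<exists>\<phi>. bij_betw \<phi> (UNIV :: 'a set) (zp3 p)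
      \<and> (\<forall>x y. \<phi> (x + y) = add3 p (\<phi> x) (\<phi> y))
      \<and> (\<lambda>T. \<phi> ` T) ` Bs = exc_orbit p ` zp3 p)"

definition digraph_aut :: "('a \<times> 'a) set \<Rightarrow> ('a \<Rightarrow> 'a) set" where
  "digraph_aut E = {f. bij f \<and> (\<forall>x y. (x, y) \<in> E \<longleftrightarrow> (f x, f y) \<in> E)}"

definition Aut_Sring :: "'a::ab_group_add set set \<Rightarrow> ('a \<Rightarrow> 'a) set" where
  "Aut_Sring Bs = (\<Inter>T\<in>Bs. digraph_aut (cay T))"

definition Iso1 :: "'a::ab_group_add set set \<Rightarrow> ('a \<Rightarrow> 'a) set" where
  "Iso1 Bs = {f. bij f \<and> f 0 = 0 \<and>
     (\<exists>Bs'. is_Sring Bs' \<and> (\<lambda>T. map_prod f f ` cay T) ` Bs = cay ` Bs')}"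

definition group_aut :: "('a::ab_group_add \<Rightarrow> 'a) set" where
  "group_aut = {f. bij f \<and> (\<forall>x y. f (x + y) = f x + f y)}"

end

theory Submission
  imports Defs "HOL.Modules"
begin

text \<open>In the coordinates given by \<open>\<phi>\<close> the basic sets are the orbits of the powers
  \<open>A\<^sup>t = ((1,t,t choose 2),(0,1,t),(0,0,1))\<close>, \<open>t \<in> \<int>/p\<close>, of the matrix \<open>A\<close> of
  \<open>exc_map\<close>. A permutation \<open>g\<close> is an automorphism iff every difference \<open>g y - g x\<close> lies in
  the orbit of \<open>y - x\<close>; testing this against \<open>(0,1,0)\<close> and \<open>(0,0,1)\<close> forces
  \<open>g x = A\<^sup>t x + w\<close>, so \<open>Aut(\<A>)\<close> consists of the \<open>p \<cdot> p\<^sup>3\<close> affine maps with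
  linear part a power of \<open>A\<close>. For \<open>f \<in> Iso\<^sub>1(\<A>)\<close> the conjugates
  \<open>x \<mapsto> f\<^sup>-\<^sup>1(f x + h)\<close> of the translations are pairwise commuting automorphisms, and a
  counting argument shows that commuting forces all of them to be translations; this says
  exactly that \<open>f\<close> is additive. Conversely a group automorphism carries \<open>\<A>\<close> onto an
  S-ring.\<close>

definition choose2 :: "int \<Rightarrow> int" where
  "choose2 t = t * (t - 1) div 2"

lemma two_choose2: "2 * choose2 t = t * t - t"
proof -
  have "even (t * (t - 1))" by simp
  then show ?thesis unfolding choose2_def by (simp add: algebra_simps)
qed

lemma choose2_add: "choose2 (s + t) = choose2 s + choose2 t + s * t"
proof -
  have "2 * choose2 (s + t) = 2 * (choose2 s + choose2 t + s * t)"
    unfolding distrib_left two_choose2 by algebra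
  then show ?thesis by simp
qed

lemma choose2_0 [simp]: "choose2 0 = 0" and choose2_1 [simp]: "choose2 1 = 0"
  by (simp_all add: choose2_def)

lemma is_SringD:
  fixes Bs :: "'a::ab_group_add set set"
  assumes "is_Sring Bs"
  shows "finite (UNIV :: 'a set)" "\<forall>T\<in>Bs. T \<noteq> {}"
    "\<forall>T1\<in>Bs. \<forall>T2\<in>Bs. T1 \<noteq> T2 \<longrightarrow> T1 \<inter> T2 = {}" "\<Union>Bs = UNIV"
    "{0} \<in> Bs" "\<forall>T\<in>Bs. uminus ` T \<in> Bs"
    "\<forall>T1\<in>Bs. \<forall>T2\<in>Bs. \<forall>T\<in>Bs. \<forall>z\<in>T. \<forall>z'\<in>T.
       card {(x, y). x \<in> T1 \<and> y \<in> T2 \<and> x + y = z}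
     = card {(x, y). x \<in> T1 \<and> y \<in> T2 \<and> x + y = z'}"
  by (insert assms[unfolded is_Sring_def], elim conjE, assumption)+

lemma group_aut_additive: "\<sigma> \<in> group_aut \<Longrightarrow> additive \<sigma>"
  unfolding group_aut_def additive_def by simp

lemma cay_image_group_aut:
  assumes "\<sigma> \<in> group_aut"
  shows "map_prod \<sigma> \<sigma> ` cay T = cay (\<sigma> ` T)"
proof
  interpret additive \<sigma> using group_aut_additive[OF assms] .
  have bij: "bij \<sigma>" using assms unfolding group_aut_def by simp
  show "map_prod \<sigma> \<sigma> ` cay T \<subseteq> cay (\<sigma> ` T)" unfolding cay_def by (auto simp: diff[symmetric])
  show "cay (\<sigma> ` T) \<subseteq> map_prod \<sigma> \<sigma> ` cay T"
  proof clarify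
    fix u v assume uv: "(u, v) \<in> cay (\<sigma> ` T)"
    obtain x y where xy: "u = \<sigma> x" "v = \<sigma> y" using bij by (metis bij_pointE)
    then have "\<sigma> (y - x) \<in> \<sigma> ` T" using uv unfolding cay_def by (simp add: diff)
    then have "(x, y) \<in> cay T" using bij unfolding cay_def by (simp add: bij_is_inj inj_image_mem_iff)
    then show "(u, v) \<in> map_prod \<sigma> \<sigma> ` cay T" unfolding xy by (rule rev_image_eqI) simp
  qed
qed

lemma sum_pairs_image_group_aut:
  assumes "\<sigma> \<in> group_aut"
  shows "{(x, y). x \<in> \<sigma> ` A \<and> y \<in> \<sigma> ` B \<and> x + y = \<sigma> z}
    = map_prod \<sigma> \<sigma> ` {(x, y). x \<in> A \<and> y \<in> B \<and> x + y = z}"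
proof -
  have add: "\<sigma> (x + y) = \<sigma> x + \<sigma> y" and inj: "inj \<sigma>" for x y
    using assms unfolding group_aut_def by (simp_all add: bij_is_inj)
  show ?thesis
    by (auto simp: add[symmetric] inj_eq[OF inj] intro!: rev_image_eqI)
qed

lemma is_Sring_image_group_aut:
  assumes Bs: "is_Sring Bs" and \<sigma>: "\<sigma> \<in> group_aut"
  shows "is_Sring ((`) \<sigma> ` Bs)"
proof -
  interpret additive \<sigma> using group_aut_additive[OF \<sigma>] .
  have bij: "bij \<sigma>" using \<sigma> unfolding group_aut_def by simp
  then have inj: "inj \<sigma>" and surj: "surj \<sigma>" by (simp_all add: bij_is_inj bij_is_surj)
  have card_eq: "card {(x, y). x \<in> \<sigma> ` A \<and> y \<in> \<sigma> ` B \<and> x + y = \<sigma> z}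
      = card {(x, y). x \<in> A \<and> y \<in> B \<and> x + y = z}" for A B z
    unfolding sum_pairs_image_group_aut[OF \<sigma>]
    by (rule card_image[OF inj_on_subset[OF prod.inj_map[OF inj inj] subset_UNIV]])
  note S = is_SringD[OF Bs]
  show ?thesis
    unfolding is_Sring_def
  proof (intro conjI ballI impI)
    show "finite (UNIV :: 'a set)" by (rule S(1))
    show "\<Union> ((`) \<sigma> ` Bs) = UNIV" using S(4) surj by (simp add: image_Union[symmetric])
    show "{0} \<in> (`) \<sigma> ` Bs" using S(5) rev_image_eqI[of "{0}" Bs "{0}" "image \<sigma>"] by (simp add: zero)
  next
    fix T assume "T \<in> (`) \<sigma> ` Bs"
    then obtain T0 where T0: "T0 \<in> Bs" "T = \<sigma> ` T0" by blast
    then show "T \<noteq> {}" using S(2) by simp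
    have "uminus ` T = \<sigma> ` uminus ` T0" unfolding T0(2) by (auto simp: minus image_image)
    then show "uminus ` T \<in> (`) \<sigma> ` Bs" using S(6) T0(1) by simp
  next
    fix T1 T2 assume "T1 \<in> (`) \<sigma> ` Bs" "T2 \<in> (`) \<sigma> ` Bs" "T1 \<noteq> T2"
    then obtain A B where "A \<in> Bs" "B \<in> Bs" "T1 = \<sigma> ` A" "T2 = \<sigma> ` B" "A \<noteq> B" by blast
    then show "T1 \<inter> T2 = {}" using S(3) by (simp add: image_Int[OF inj, symmetric])
  next
    fix T1 T2 T z z' assume "T1 \<in> (`) \<sigma> ` Bs" "T2 \<in> (`) \<sigma> ` Bs" "T \<in> (`) \<sigma> ` Bs"
      and "z \<in> T" "z' \<in> T"
    then obtain A B C x x' where ABC: "A \<in> Bs" "B \<in> Bs" "C \<in> Bs" "x \<in> C" "x' \<in> C"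
      and T12: "T1 = \<sigma> ` A" "T2 = \<sigma> ` B" and zz': "z = \<sigma> x" "z' = \<sigma> x'"
      by blast
    show "card {(x, y). x \<in> T1 \<and> y \<in> T2 \<and> x + y = z}
        = card {(x, y). x \<in> T1 \<and> y \<in> T2 \<and> x + y = z'}"
      unfolding T12 zz' card_eq by (rule S(7)[rule_format, OF ABC])
  qed
qed

lemma group_aut_subset_Iso1:
  fixes Bs :: "'a::ab_group_add set set"
  assumes "is_Sring Bs"
  shows "group_aut \<subseteq> Iso1 Bs"
proof
  fix \<sigma> :: "'a \<Rightarrow> 'a" assume \<sigma>: "\<sigma> \<in> group_aut"
  have "bij \<sigma>" using \<sigma> unfolding group_aut_def by simp
  moreover have "\<sigma> 0 = 0" using additive.zero[OF group_aut_additive[OF \<sigma>]] .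
  moreover have "(\<lambda>T. map_prod \<sigma> \<sigma> ` cay T) ` Bs = cay ` (`) \<sigma> ` Bs"
    by (simp add: cay_image_group_aut[OF \<sigma>] image_image)
  ultimately show "\<sigma> \<in> Iso1 Bs"
    using is_Sring_image_group_aut[OF assms \<sigma>] unfolding Iso1_def by blast
qed

lemma Iso1D:
  fixes f :: "'a::ab_group_add \<Rightarrow> 'a"
  assumes "f \<in> Iso1 Bs"
  shows "bij f" and "f 0 = 0" and "\<exists>Bs'. (\<lambda>T. map_prod f f ` cay T) ` Bs = cay ` Bs'"
  using assms unfolding Iso1_def by blast+

lemma Iso1_cay:
  fixes f :: "'a::ab_group_add \<Rightarrow> 'a"
  assumes f: "f \<in> Iso1 Bs" and T: "T \<in> Bs"
  obtains T' where "\<And>x y. (x, y) \<in> cay T \<longleftrightarrow> f y - f x \<in> T'"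
proof -
  obtain Bs' where Bs': "(\<lambda>T. map_prod f f ` cay T) ` Bs = cay ` Bs'" using Iso1D(3)[OF f] ..
  have "map_prod f f ` cay T \<in> cay ` Bs'" unfolding Bs'[symmetric] using T by (rule imageI)
  then obtain T' where T': "map_prod f f ` cay T = cay T'" by blast
  have "inj (map_prod f f)" using Iso1D(1)[OF f] by (simp add: bij_is_inj prod.inj_map)
  then have "(x, y) \<in> cay T \<longleftrightarrow> map_prod f f (x, y) \<in> cay T'" for x y
    unfolding T'[symmetric] by (rule inj_image_mem_iff[symmetric])
  then show ?thesis by (intro that) (simp add: cay_def)
qed

lemma Iso1_conjugate_translation_in_Aut_Sring:
  fixes f :: "'a::ab_group_add \<Rightarrow> 'a"
  assumes f: "f \<in> Iso1 Bs"
  shows "(\<lambda>x. inv f (f x + h)) \<in> Aut_Sring Bs"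
proof -
  define g where "g = inv f \<circ> (\<lambda>x. x + h) \<circ> f"
  have "bij f" using Iso1D(1)[OF f] .
  then have bij_g: "bij g" unfolding g_def by (intro bij_comp bij_imp_bij_inv bij_plus_right)
  have fg: "f (g x) = f x + h" for x unfolding g_def using \<open>bij f\<close> by (simp add: bij_is_surj surj_f_inv_f)
  have "g \<in> digraph_aut (cay T)" if T: "T \<in> Bs" for T
  proof -
    obtain T' where T': "\<And>x y. (x, y) \<in> cay T \<longleftrightarrow> f y - f x \<in> T'" using Iso1_cay[OF f T] by metis
    have "\<forall>x y. (x, y) \<in> cay T \<longleftrightarrow> (g x, g y) \<in> cay T" unfolding T' fg by simp
    with bij_g show ?thesis unfolding digraph_aut_def by (intro CollectI conjI)
  qed
  then have "g \<in> Aut_Sring Bs" unfolding Aut_Sring_def by blast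
  then show ?thesis unfolding g_def comp_def .
qed

locale exceptional_Sring =
  fixes p :: nat and \<phi> :: "'a::ab_group_add \<Rightarrow> nat \<times> nat \<times> nat" and Bs :: "'a set set"
  assumes prime: "prime p" and odd: "odd p"
    and bij_\<phi>: "bij_betw \<phi> UNIV (zp3 p)"
    and \<phi>_add: "\<And>x y. \<phi> (x + y) = add3 p (\<phi> x) (\<phi> y)"
    and orbits: "(\<lambda>T. \<phi> ` T) ` Bs = exc_orbit p ` zp3 p"
    and Sring: "is_Sring Bs"
begin

abbreviation "P \<equiv> int p"

lemma p_ge_3: "p \<ge> 3"
  using prime_ge_2_nat[OF prime] odd by (cases "p = 2") auto

lemma prime_dvd_cancel: "P dvd c * y \<Longrightarrow> \<not> P dvd c \<Longrightarrow> P dvd y"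
  using prime prime_dvd_mult_iff by (metis prime_nat_int_transfer)

lemma dvd_double_cancel: "P dvd 2 * y \<Longrightarrow> P dvd y"
proof -
  have "\<not> P dvd 2" using p_ge_3 by (auto dest!: zdvd_imp_le)
  then show "P dvd 2 * y \<Longrightarrow> P dvd y" using prime_dvd_cancel by blast
qed

lemma finite_group: "finite (UNIV :: 'a set)"
  using is_SringD(1)[OF Sring] .

lemma inj_\<phi>: "inj \<phi>" and surj_\<phi>: "range \<phi> = zp3 p"
  using bij_\<phi> unfolding bij_betw_def by auto

definition c1 :: "'a \<Rightarrow> int" where "c1 x = int (fst (\<phi> x))"
definition c2 :: "'a \<Rightarrow> int" where "c2 x = int (fst (snd (\<phi> x)))"
definition c3 :: "'a \<Rightarrow> int" where "c3 x = int (snd (snd (\<phi> x)))"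

lemma c_range: "0 \<le> c1 x" "c1 x < P" "0 \<le> c2 x" "c2 x < P" "0 \<le> c3 x" "c3 x < P"
proof -
  have "\<phi> x \<in> zp3 p" using surj_\<phi> by blast
  then show "0 \<le> c1 x" "c1 x < P" "0 \<le> c2 x" "c2 x < P" "0 \<le> c3 x" "c3 x < P"
    unfolding c1_def c2_def c3_def zp3_def by auto
qed

lemma residue_eq: "0 \<le> a \<Longrightarrow> a < P \<Longrightarrow> 0 \<le> b \<Longrightarrow> b < P \<Longrightarrow> P dvd a - b \<Longrightarrow> a = b"
  for a b :: int
  by (metis mod_eq_dvd_iff mod_pos_pos_trivial)

lemma coords_cong_imp_eq:
  assumes "P dvd c1 x - c1 y" "P dvd c2 x - c2 y" "P dvd c3 x - c3 y"
  shows "x = y"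
proof -
  have "c1 x = c1 y" "c2 x = c2 y" "c3 x = c3 y"
    using assms residue_eq c_range by blast+
  then have "\<phi> x = \<phi> y" unfolding c1_def c2_def c3_def by (simp add: prod_eq_iff)
  then show "x = y" using inj_\<phi> by (simp add: inj_eq)
qed

lemma int_add_mod_dvd: "P dvd int ((u + v) mod p) - (int u + int v)"
  by (metis mod_eq_dvd_iff mod_mod_trivial of_nat_add zmod_int)

lemma c_add: "P dvd c1 (x + y) - (c1 x + c1 y)" "P dvd c2 (x + y) - (c2 x + c2 y)"
  "P dvd c3 (x + y) - (c3 x + c3 y)"
proof -
  obtain a b c a' b' c' where "\<phi> x = (a, b, c)" "\<phi> y = (a', b', c')"
    by (metis prod.exhaust)
  then show "P dvd c1 (x + y) - (c1 x + c1 y)" "P dvd c2 (x + y) - (c2 x + c2 y)"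
    "P dvd c3 (x + y) - (c3 x + c3 y)"
    unfolding c1_def c2_def c3_def \<phi>_add by (simp_all add: int_add_mod_dvd)
qed

lemma c_diff: "P dvd c1 (x - y) - (c1 x - c1 y)" "P dvd c2 (x - y) - (c2 x - c2 y)"
  "P dvd c3 (x - y) - (c3 x - c3 y)"
  using c_add[of "x - y" y] by (simp_all add: dvd_diff_commute algebra_simps)

definition point :: "int \<Rightarrow> int \<Rightarrow> int \<Rightarrow> 'a" where
  "point a b c = inv \<phi> (nat (a mod P), nat (b mod P), nat (c mod P))"

lemma c_point: "P dvd c1 (point a b c) - a" "P dvd c2 (point a b c) - b"
  "P dvd c3 (point a b c) - c"
proof -
  have "(nat (a mod P), nat (b mod P), nat (c mod P)) \<in> range \<phi>"
    using p_ge_3 unfolding surj_\<phi> zp3_def by (simp add: nat_less_iff)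
  then have "\<phi> (point a b c) = (nat (a mod P), nat (b mod P), nat (c mod P))"
    unfolding point_def by (rule f_inv_into_f)
  then show "P dvd c1 (point a b c) - a" "P dvd c2 (point a b c) - b"
    "P dvd c3 (point a b c) - c"
    unfolding c1_def c2_def c3_def using p_ge_3 by (simp_all add: mod_eq_dvd_iff[symmetric])
qed

definition utri_image :: "int \<Rightarrow> int \<Rightarrow> 'a \<Rightarrow> 'a \<Rightarrow> bool" where
  "utri_image t h x y \<longleftrightarrow> P dvd c1 y - (c1 x + t * c2 x + h * c3 x)
     \<and> P dvd c2 y - (c2 x + t * c3 x) \<and> P dvd c3 y - c3 x"

lemma utri_imageD:
  assumes "utri_image t h x y"
  shows "P dvd c1 y - (c1 x + t * c2 x + h * c3 x)" "P dvd c2 y - (c2 x + t * c3 x)"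
    "P dvd c3 y - c3 x"
  using assms unfolding utri_image_def by blast+

lemma utri_image_unique: "utri_image t h x y \<Longrightarrow> utri_image t h x y' \<Longrightarrow> y = y'"
  unfolding utri_image_def by (intro coords_cong_imp_eq) algebra+

lemma utri_image_cong:
  "P dvd t - t' \<Longrightarrow> P dvd h - h' \<Longrightarrow> utri_image t h x y \<Longrightarrow> utri_image t' h' x y"
  unfolding utri_image_def by (elim conjE, intro conjI) algebra+

lemma utri_image_trans:
  "utri_image s g x y \<Longrightarrow> utri_image t h y z \<Longrightarrow> utri_image (s + t) (g + h + s * t) x z"
  unfolding utri_image_def by (elim conjE, intro conjI) algebra+

text \<open>\<open>exc_power t\<close> is \<open>A\<^sup>t\<close> for the matrix \<open>A\<close> of \<open>exc_map\<close>; its corner entry is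
  \<open>t choose 2\<close>.\<close>

definition exc_power :: "int \<Rightarrow> 'a \<Rightarrow> 'a" where
  "exc_power t x = point (c1 x + t * c2 x + choose2 t * c3 x) (c2 x + t * c3 x) (c3 x)"

lemma utri_image_exc_power: "utri_image t (choose2 t) x (exc_power t x)"
  unfolding utri_image_def exc_power_def using c_point by blast

lemma exc_power_eq_iff: "y = exc_power t x \<longleftrightarrow> utri_image t (choose2 t) x y"
  using utri_image_exc_power utri_image_unique by blast

text \<open>This is where \<open>p\<close> odd is needed: \<open>2\<close> is invertible mod \<open>p\<close>.\<close>

lemma choose2_cong: "P dvd s - t \<Longrightarrow> P dvd choose2 s - choose2 t"
proof -
  assume "P dvd s - t"
  then have "P dvd 2 * (choose2 s - choose2 t)"
    unfolding right_diff_distrib two_choose2 by algebra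
  then show ?thesis by (rule dvd_double_cancel)
qed

lemma exc_power_cong: "P dvd s - t \<Longrightarrow> exc_power s = exc_power t"
  using utri_image_cong[OF _ choose2_cong utri_image_exc_power] exc_power_eq_iff by blast

lemma exc_power_exc_power: "exc_power s (exc_power t x) = exc_power (t + s) x"
proof -
  have "utri_image (t + s) (choose2 t + choose2 s + t * s) x (exc_power s (exc_power t x))"
    using utri_image_trans utri_image_exc_power by blast
  then show ?thesis by (metis exc_power_eq_iff choose2_add)
qed

lemma exc_power_0: "exc_power 0 x = x"
proof -
  have "utri_image 0 0 x x" unfolding utri_image_def by simp
  then show ?thesis by (metis exc_power_eq_iff choose2_0)
qed

lemma inj_exc_power: "inj (exc_power t)"
  by (metis exc_power_0 exc_power_exc_power injI add.right_inverse)

lemma exc_power_add: "exc_power t (x + y) = exc_power t x + exc_power t y"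
proof -
  have "utri_image t (choose2 t) (x + y) (exc_power t x + exc_power t y)"
    using utri_image_exc_power[of t x] utri_image_exc_power[of t y]
      c_add[of x y] c_add[of "exc_power t x" "exc_power t y"]
    unfolding utri_image_def by (elim conjE, intro conjI) algebra+
  then show ?thesis by (metis exc_power_eq_iff)
qed

lemma exc_power_zero: "exc_power t 0 = 0"
  using exc_power_add[of t 0 0] by simp

definition same_orbit :: "'a \<Rightarrow> 'a \<Rightarrow> bool" where
  "same_orbit x y \<longleftrightarrow> (\<exists>t. y = exc_power t x)"

lemma same_orbit_sym: "same_orbit x y \<Longrightarrow> same_orbit y x"
  unfolding same_orbit_def by (metis exc_power_0 exc_power_exc_power add.right_inverse)

lemma same_orbit_trans: "same_orbit x y \<Longrightarrow> same_orbit y z \<Longrightarrow> same_orbit x z"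
  unfolding same_orbit_def by (metis exc_power_exc_power)

lemma exc_map_\<phi>: "exc_map p (\<phi> x) = \<phi> (exc_power 1 x)"
proof -
  obtain a b c where abc: "\<phi> x = (a, b, c)" by (metis prod.exhaust)
  moreover have "\<phi> x \<in> zp3 p" using surj_\<phi> by blast
  ultimately have "c < p" unfolding zp3_def by simp
  then have "exc_map p (\<phi> x) \<in> range \<phi>"
    using p_ge_3 unfolding abc surj_\<phi> zp3_def by simp
  then obtain y where y: "exc_map p (\<phi> x) = \<phi> y" by blast
  then have "\<phi> y = ((a + b) mod p, (b + c) mod p, c)" using abc by simp
  then have "utri_image 1 0 x y"
    unfolding utri_image_def c1_def c2_def c3_def abc by (simp add: int_add_mod_dvd)
  then show ?thesis using y exc_power_eq_iff[of y 1 x] by simp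
qed

lemma exc_map_power_\<phi>: "(exc_map p ^^ k) (\<phi> x) = \<phi> (exc_power (int k) x)"
proof (induction k)
  case 0
  then show ?case by (simp add: exc_power_0)
next
  case (Suc k)
  then show ?case by (simp add: exc_map_\<phi> exc_power_exc_power add.commute)
qed

lemma exc_orbit_\<phi>: "exc_orbit p (\<phi> x) = \<phi> ` {y. same_orbit x y}"
proof
  show "exc_orbit p (\<phi> x) \<subseteq> \<phi> ` {y. same_orbit x y}"
    unfolding exc_orbit_def same_orbit_def by (auto simp: exc_map_power_\<phi>)
  show "\<phi> ` {y. same_orbit x y} \<subseteq> exc_orbit p (\<phi> x)"
  proof (rule image_subsetI)
    fix y assume "y \<in> {y. same_orbit x y}"
    then obtain t where "y = exc_power t x" unfolding same_orbit_def by blast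
    also have "\<dots> = exc_power (int (nat (t mod P))) x"
      using p_ge_3 exc_power_cong[of t "t mod P"] by (simp add: dvd_minus_mod)
    finally show "\<phi> y \<in> exc_orbit p (\<phi> x)"
      unfolding exc_orbit_def exc_map_power_\<phi> by blast
  qed
qed

lemma basic_set_eq:
  assumes "T \<in> Bs" "x \<in> T"
  shows "T = {y. same_orbit x y}"
proof -
  have "\<phi> ` T \<in> exc_orbit p ` range \<phi>"
    using imageI[OF assms(1), of "image \<phi>"] unfolding orbits surj_\<phi> .
  then obtain x0 where "\<phi> ` T = \<phi> ` {y. same_orbit x0 y}"
    unfolding exc_orbit_\<phi> image_image by blast
  then have T: "T = {y. same_orbit x0 y}"
    using inj_\<phi> by (simp add: inj_image_eq_iff)
  with assms(2) have "same_orbit x0 x" by blast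
  then have "same_orbit x0 y \<longleftrightarrow> same_orbit x y" for y
    using same_orbit_sym same_orbit_trans by metis
  then show ?thesis unfolding T by blast
qed

lemma zero_in_Bs: "{0} \<in> Bs" and Union_Bs: "\<Union>Bs = UNIV"
  using is_SringD(4,5)[OF Sring] by simp_all

lemma Aut_Sring_iff:
  "g \<in> Aut_Sring Bs \<longleftrightarrow> bij g \<and> (\<forall>x y. same_orbit (y - x) (g y - g x))"
proof
  assume g: "g \<in> Aut_Sring Bs"
  have "g \<in> digraph_aut (cay {0})" using g zero_in_Bs unfolding Aut_Sring_def by blast
  then have "bij g" unfolding digraph_aut_def by blast
  moreover have "same_orbit (y - x) (g y - g x)" for x y
  proof -
    obtain T where T: "T \<in> Bs" "y - x \<in> T" using Union_Bs by blast
    then have "g \<in> digraph_aut (cay T)" using g unfolding Aut_Sring_def by blast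
    then have "g y - g x \<in> T" using T(2) unfolding digraph_aut_def cay_def by blast
    then show ?thesis using basic_set_eq[OF T] by blast
  qed
  ultimately show "bij g \<and> (\<forall>x y. same_orbit (y - x) (g y - g x))" by blast
next
  assume g: "bij g \<and> (\<forall>x y. same_orbit (y - x) (g y - g x))"
  have diff_iff: "y - x \<in> T \<longleftrightarrow> g y - g x \<in> T" if T: "T \<in> Bs" for T x y
  proof
    assume "y - x \<in> T"
    from basic_set_eq[OF T this] show "g y - g x \<in> T" using g by simp
  next
    assume "g y - g x \<in> T"
    from basic_set_eq[OF T this] have "T = {z. same_orbit (g y - g x) z}" .
    moreover have "same_orbit (g y - g x) (y - x)" using g same_orbit_sym by blast
    ultimately show "y - x \<in> T" by simp
  qed
  have "g \<in> digraph_aut (cay T)" if T: "T \<in> Bs" for T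
  proof -
    have "\<forall>x y. (x, y) \<in> cay T \<longleftrightarrow> (g x, g y) \<in> cay T"
      using diff_iff[OF T] unfolding cay_def by simp
    with g show ?thesis unfolding digraph_aut_def by (intro CollectI conjI) simp_all
  qed
  then show "g \<in> Aut_Sring Bs" unfolding Aut_Sring_def by blast
qed

lemma affine_in_Aut_Sring: "(\<lambda>x. exc_power t x + w) \<in> Aut_Sring Bs"
proof -
  have "inj (\<lambda>x. exc_power t x + w)"
    using inj_exc_power by (simp add: inj_def)
  then have "bij (\<lambda>x. exc_power t x + w)"
    using finite_group by (simp add: bij_def finite_UNIV_inj_surj)
  moreover have "exc_power t y + w - (exc_power t x + w) = exc_power t (y - x)" for x y
    using exc_power_add[of t "y - x" x] by simp
  ultimately show ?thesis unfolding Aut_Sring_iff same_orbit_def by metis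
qed

text \<open>Compare \<open>f y = A\<^sup>t y\<close> with \<open>f y - f e\<^sub>2 = A\<^sup>s (y - e\<^sub>2)\<close> for
  \<open>e\<^sub>2 = (0,1,0)\<close>: the second coordinate gives \<open>t = s\<close> as \<open>c3 y \<noteq> 0\<close>, and then the first
  gives \<open>t = c1 (f e\<^sub>2)\<close>. Points with \<open>c3 y = 0\<close> are handled below by comparing with
  \<open>e\<^sub>3 = (0,0,1)\<close> instead.\<close>

lemma Aut_fixing_0_generic:
  assumes f0: "f 0 = 0" and f: "\<And>x y. same_orbit (y - x) (f y - f x)"
    and y: "\<not> P dvd c3 y"
  shows "f y = exc_power (c1 (f (point 0 1 0))) y"
proof -
  define e2 where "e2 = point 0 1 0"
  have "\<exists>t. f y - f x = exc_power t (y - x)" for x y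
    using f unfolding same_orbit_def by blast
  then obtain t s r where "f y = exc_power t y" "f y - f e2 = exc_power s (y - e2)"
    "f e2 = exc_power r e2"
    using f0 by (metis diff_zero)
  then have "utri_image t (choose2 t) y (f y)" "utri_image r (choose2 r) e2 (f e2)"
    "utri_image s (choose2 s) (y - e2) (f y - f e2)"
    using exc_power_eq_iff by metis+
  note fy = utri_imageD[OF this(1)] and fe2 = utri_imageD[OF this(2)]
    and fdiff = utri_imageD[OF this(3)]
  note diff = c_diff[of y e2] c_diff[of "f y" "f e2"] and e2 = c_point[of 0 1 0, folded e2_def]
  have "P dvd c3 y * (t - s)" using fy(2) fe2(2) fdiff(2) diff(2,3,5) e2(2,3) by algebra
  then have ts: "P dvd t - s" using y prime_dvd_cancel by blast
  have "P dvd t - c1 (f e2)"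
    using fy(1) fe2(1) fdiff(1) diff(1-4) e2 ts choose2_cong[OF ts] by algebra
  then show ?thesis using exc_power_cong \<open>f y = exc_power t y\<close> unfolding e2_def by metis
qed

lemma Aut_fixing_0_degenerate:
  assumes f0: "f 0 = 0" and f: "\<And>x y. same_orbit (y - x) (f y - f x)"
    and y: "P dvd c3 y"
  shows "f y = exc_power (c1 (f (point 0 1 0))) y"
proof -
  define e3 where "e3 = point 0 0 1"
  define k where "k = c1 (f (point 0 1 0))"
  have c3_e3: "P dvd c3 e3 - 1" unfolding e3_def by (rule c_point)
  have "\<not> P dvd c3 e3"
  proof
    assume "P dvd c3 e3"
    then have "P dvd 1" using c3_e3 by algebra
    then show False using p_ge_3 by (auto dest!: zdvd_imp_le)
  qed
  then have "f e3 = exc_power k e3" unfolding k_def by (rule Aut_fixing_0_generic[OF f0 f])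
  moreover have "\<exists>t. f y - f x = exc_power t (y - x)" for x y
    using f unfolding same_orbit_def by blast
  then obtain t s where "f y = exc_power t y" "f e3 - f y = exc_power s (e3 - y)"
    using f0 by (metis diff_zero)
  ultimately have "utri_image t (choose2 t) y (f y)" "utri_image k (choose2 k) e3 (f e3)"
    "utri_image s (choose2 s) (e3 - y) (f e3 - f y)"
    using exc_power_eq_iff by metis+
  note fy = utri_imageD[OF this(1)] and fe3 = utri_imageD[OF this(2)]
    and fdiff = utri_imageD[OF this(3)]
  note diff = c_diff[of e3 y] c_diff[of "f e3" "f y"] and e3 = c_point[of 0 0 1, folded e3_def]
  have sk: "P dvd s - k" using fy(2) fe3(2) fdiff(2) diff(2,3,5) e3(2,3) y by algebra
  have "P dvd c1 (f y) - (c1 y + k * c2 y + choose2 k * c3 y)"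
    using fy(1) fe3(1) fdiff(1) diff(1-4) e3 y sk choose2_cong[OF sk] by algebra
  moreover have "P dvd c2 (f y) - (c2 y + k * c3 y)" using fy(2) y by algebra
  ultimately have "utri_image k (choose2 k) y (f y)"
    unfolding utri_image_def using fy(3) by blast
  then show ?thesis unfolding k_def by (metis exc_power_eq_iff)
qed

lemma Aut_fixing_0:
  assumes "f 0 = 0" "\<And>x y. same_orbit (y - x) (f y - f x)"
  shows "f = exc_power (c1 (f (point 0 1 0)))"
proof
  fix y
  show "f y = exc_power (c1 (f (point 0 1 0))) y"
    using Aut_fixing_0_generic[OF assms] Aut_fixing_0_degenerate[OF assms] by (cases "P dvd c3 y")
qed

lemma Aut_Sring_affine:
  assumes "g \<in> Aut_Sring Bs"
  shows "g = (\<lambda>x. exc_power (c1 (g (point 0 1 0) - g 0)) x + g 0)"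
proof -
  define f where "f x = g x - g 0" for x
  have "same_orbit (y - x) (f y - f x)" for x y
    using assms unfolding Aut_Sring_iff f_def by simp
  then have "f = exc_power (c1 (f (point 0 1 0)))"
    by (intro Aut_fixing_0) (simp_all add: f_def)
  then show ?thesis unfolding f_def by (metis diff_add_cancel)
qed

abbreviation affine :: "int \<times> 'a \<Rightarrow> 'a \<Rightarrow> 'a" where
  "affine \<equiv> \<lambda>(t, w) x. exc_power t x + w"

lemma Aut_Sring_eq: "Aut_Sring Bs = affine ` ({0..<P} \<times> UNIV)"
proof
  show "Aut_Sring Bs \<subseteq> affine ` ({0..<P} \<times> UNIV)"
  proof
    fix g assume g: "g \<in> Aut_Sring Bs"
    have "c1 (g (point 0 1 0) - g 0) \<in> {0..<P}" using c_range by simp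
    then show "g \<in> affine ` ({0..<P} \<times> UNIV)"
      using Aut_Sring_affine[OF g] by (auto intro!: image_eqI)
  qed
  show "affine ` ({0..<P} \<times> UNIV) \<subseteq> Aut_Sring Bs"
    using affine_in_Aut_Sring by auto
qed

lemma inj_on_affine: "inj_on affine ({0..<P} \<times> UNIV)"
proof (rule inj_onI)
  fix a b assume "a \<in> {0..<P} \<times> UNIV" "b \<in> {0..<P} \<times> UNIV" and eq: "affine a = affine b"
  then obtain t w t' w' where ab: "a = (t, w)" "b = (t', w')" and t: "t \<in> {0..<P}" "t' \<in> {0..<P}"
    by blast
  have affine_eq: "exc_power t x + w = exc_power t' x + w'" for x
    using eq unfolding ab by (metis case_prod_conv)
  from affine_eq[of 0] have w: "w = w'" by (simp add: exc_power_zero)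
  define e3 where "e3 = point 0 0 1"
  have e3: "exc_power t e3 = exc_power t' e3" using affine_eq[of e3] unfolding w by simp
  have "P dvd t - t'"
    using utri_imageD(2)[OF utri_image_exc_power, of t e3, unfolded e3]
      utri_imageD(2)[OF utri_image_exc_power, of t' e3] c_point(3)[of 0 0 1, folded e3_def]
    by algebra
  then show "a = b" using t w residue_eq unfolding ab by auto
qed

lemma card_UNIV: "card (UNIV :: 'a set) = p ^ 3"
proof -
  have "zp3 p = {..<p} \<times> {..<p} \<times> {..<p}" unfolding zp3_def by auto
  then show ?thesis
    using bij_betw_same_card[OF bij_\<phi>] by (simp add: card_cartesian_product power3_eq_cube)
qed

lemma card_Aut_Sring: "card (Aut_Sring Bs) = p ^ 4"
proof -
  have "card (Aut_Sring Bs) = card ({0..<P} \<times> (UNIV :: 'a set))"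
    unfolding Aut_Sring_eq by (rule card_image[OF inj_on_affine])
  also have "\<dots> = p ^ 4" by (simp add: card_cartesian_product card_UNIV eval_nat_numeral)
  finally show ?thesis .
qed

lemma commuting_affine_maps_coords:
  assumes comm: "\<And>a b. exc_power (\<tau> a) (u b) + u a = exc_power (\<tau> b) (u a) + u b"
    and h: "\<not> P dvd \<tau> h" and k: "P dvd \<tau> k - \<tau> k'"
  shows "P dvd c2 (u k) - c2 (u k')" and "P dvd c3 (u k) - c3 (u k')"
proof -
  have coords: "P dvd \<tau> h * c3 (u k) - \<tau> k * c3 (u h)"
    "P dvd \<tau> h * c2 (u k) + choose2 (\<tau> h) * c3 (u k) - (\<tau> k * c2 (u h) + choose2 (\<tau> k) * c3 (u h))"
    for k
  proof -
    note A = utri_image_exc_power[THEN utri_imageD(1)] utri_image_exc_power[THEN utri_imageD(2)]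
    have "P dvd c1 (exc_power (\<tau> h) (u k) + u h) - c1 (exc_power (\<tau> k) (u h) + u k)"
      "P dvd c2 (exc_power (\<tau> h) (u k) + u h) - c2 (exc_power (\<tau> k) (u h) + u k)"
      using comm by simp_all
    then show "P dvd \<tau> h * c3 (u k) - \<tau> k * c3 (u h)"
      "P dvd \<tau> h * c2 (u k) + choose2 (\<tau> h) * c3 (u k) - (\<tau> k * c2 (u h) + choose2 (\<tau> k) * c3 (u h))"
      using A(1)[of "\<tau> h" "u k"] A(1)[of "\<tau> k" "u h"] A(2)[of "\<tau> h" "u k"] A(2)[of "\<tau> k" "u h"]
        c_add(1,2)[of "exc_power (\<tau> h) (u k)" "u h"] c_add(1,2)[of "exc_power (\<tau> k) (u h)" "u k"]
      by algebra+
  qed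
  have "P dvd \<tau> h * (c3 (u k) - c3 (u k'))"
    using coords(1)[of k] coords(1)[of k'] k by algebra
  then show c3: "P dvd c3 (u k) - c3 (u k')" using h prime_dvd_cancel by blast
  have "P dvd \<tau> h * (c2 (u k) - c2 (u k'))"
    using coords(2)[of k] coords(2)[of k'] k choose2_cong[OF k] c3 by algebra
  then show "P dvd c2 (u k) - c2 (u k')" using h prime_dvd_cancel by blast
qed

text \<open>If some \<open>\<tau> h\<close> were nonzero mod \<open>p\<close>, the last two coordinates of \<open>u k\<close> would be
  determined by \<open>\<tau> k mod p\<close>, so they could take only \<open>p\<close> values instead of \<open>p\<^sup>2\<close>.\<close>

lemma commuting_affine_maps_translations:
  assumes comm: "\<And>a b. exc_power (\<tau> a) (u b) + u a = exc_power (\<tau> b) (u a) + u b"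
    and u: "surj u"
  shows "P dvd \<tau> h"
proof (rule ccontr)
  assume h: "\<not> P dvd \<tau> h"
  define \<psi> where "\<psi> ij = \<tau> (inv u (point 0 (fst ij) (snd ij))) mod P" for ij
  have "inj_on \<psi> ({0..<P} \<times> {0..<P})"
  proof (rule inj_onI, clarify)
    fix i j i' j' assume ij: "i \<in> {0..<P}" "j \<in> {0..<P}" "i' \<in> {0..<P}" "j' \<in> {0..<P}"
      and "\<psi> (i, j) = \<psi> (i', j')"
    then have "P dvd \<tau> (inv u (point 0 i j)) - \<tau> (inv u (point 0 i' j'))"
      unfolding \<psi>_def by (simp add: mod_eq_dvd_iff)
    from commuting_affine_maps_coords[OF comm h this]
    have "P dvd c2 (point 0 i j) - c2 (point 0 i' j')" "P dvd c3 (point 0 i j) - c3 (point 0 i' j')"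
      using u by (simp_all add: surj_f_inv_f)
    then have "P dvd i - i'" "P dvd j - j'"
      using c_point(2,3)[of 0 i j] c_point(2,3)[of 0 i' j'] by algebra+
    then show "i = i' \<and> j = j'" using ij residue_eq by simp
  qed
  moreover have "\<psi> ` ({0..<P} \<times> {0..<P}) \<subseteq> {0..<P}"
    using p_ge_3 unfolding \<psi>_def by auto
  ultimately have "card ({0..<P} \<times> {0..<P}) \<le> card {0..<P}"
    by (intro card_inj_on_le) simp_all
  then have "p * p \<le> p" by (simp add: card_cartesian_product)
  then show False using mult_le_mono1[OF p_ge_3, of p] p_ge_3 by linarith
qed

lemma Iso1_subset_group_aut: "Iso1 Bs \<subseteq> group_aut"
proof
  fix f assume f: "f \<in> Iso1 Bs"
  define g where "g h x = inv f (f x + h)" for h x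
  have f0: "f 0 = 0" and "bij f" using Iso1D[OF f] by simp_all
  then have fg: "f (g h x) = f x + h" and g0: "g h 0 = inv f h" for h x
    unfolding g_def by (simp_all add: bij_is_surj surj_f_inv_f)
  define \<tau> where "\<tau> h = c1 (g h (point 0 1 0) - g h 0)" for h
  have g_affine: "g h x = exc_power (\<tau> h) x + inv f h" for h x
    using Aut_Sring_affine[OF Iso1_conjugate_translation_in_Aut_Sring[OF f, of h]] g0
    unfolding \<tau>_def g_def by metis
  have "g a (g b 0) = g b (g a 0)" for a b
    using \<open>bij f\<close> unfolding g_def by (simp add: bij_is_surj surj_f_inv_f bij_is_inj add_ac)
  then have "exc_power (\<tau> a) (inv f b) + inv f a = exc_power (\<tau> b) (inv f a) + inv f b" for a b
    unfolding g0 unfolding g_affine .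
  then have "P dvd \<tau> h" for h
    using \<open>bij f\<close> by (intro commuting_affine_maps_translations[of \<tau> "inv f"])
      (simp_all add: bij_is_surj bij_imp_bij_inv)
  then have "g h x = x + inv f h" for h x
    unfolding g_affine using exc_power_cong[of "\<tau> h" 0] by (simp add: exc_power_0)
  then have "f (x + y) = f x + f y" for x y
    using fg[of "f y" x] \<open>bij f\<close> by (simp add: bij_is_inj)
  then show "f \<in> group_aut" using \<open>bij f\<close> unfolding group_aut_def by blast
qed

end

theorem lemma2p17:
  fixes p :: nat and Bs :: "'a::ab_group_add set set"
  assumes "prime p" and "odd p"
    and "\<exists>\<phi>. bij_betw \<phi> (UNIV :: 'a set) (zp3 p) \<and> (\<forall>x y. \<phi> (x + y) = add3 p (\<phi> x) (\<phi> y))"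
    and "is_Sring Bs" and "exceptional p Bs"
  shows "card (Aut_Sring Bs) = p ^ 4 \<and> Iso1 Bs = group_aut"
proof -
  obtain \<phi> where "bij_betw \<phi> (UNIV :: 'a set) (zp3 p)" "\<forall>x y. \<phi> (x + y) = add3 p (\<phi> x) (\<phi> y)"
    "(\<lambda>T. \<phi> ` T) ` Bs = exc_orbit p ` zp3 p"
    using assms(5) unfolding exceptional_def by blast
  then interpret exceptional_Sring p \<phi> Bs
    using assms(1,2,4) by unfold_locales auto
  show ?thesis
    using card_Aut_Sring Iso1_subset_group_aut group_aut_subset_Iso1[OF assms(4)] by blast
qed

end
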